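(* Let $X=x_1\dots x_n$ and $Y=y_1\dots y_m$ be finite words in $\{B,b,R,r\}$, and let $Z=y_m'y_{m-1}'\dots y_1'x_1x_2\dots x_n$, where $B'=b$, $R'=r$, $b'=B$, $r'=R$. Then $T(Z,m+1)=T_+(X)\cup T_-(Y)$, where the right-hand side is the triangulation of the union of $T_+(X)$ (in the upper half-plane) and $T_-(Y)$ (in the lower half-plane) glued along the real line, rooted at the root of $T_+(X)$.
   Context: Necklace construction (Sheffield). Given a finite word $X=x_1\dots x_n$ in $\{B,b,R,r\}$, build inductively disc triangulations $D_0\subset\dots\subset D_n$ in the closed upper half-plane with blue/red vertices and an active edge with blue endpoint $b_j$ and red endpoint $r_j$; initially non-positive integers are blue, positive integers red, $b_0=0,r_0=1$. Step according to $x_{j+1}$: (B) new blue vertex $b_{j+1}$, triangle $(b_j,r_j,b_{j+1})$, $r_{j+1}=r_j$; (R) new red vertex $r_{j+1}$, triangle $(b_j,r_j,r_{j+1})$, $b_{j+1}=b_j$; (b) $b_{j+1}$ = counterclockwise boundary neighbour of $b_j$ (or $m-1$, adding edge $[m-1,m]$, if $b_j=m\in\mathbb Z$), triangle $(b_{j+1},b_j,r_j)$, $r_{j+1}=r_j$; (r) $r_{j+1}$ = clockwise boundary neighbour of $r_j$ (or $m+1$, adding $[m,m+1]$, if $r_j=m\in\mathbb Z$), triangle $(b_j,r_j,r_{j+1})$, $b_{j+1}=b_j$. $T_+(X)$ is $D_n$ rooted at the first triangle constructed; $T_-(X)$ is the analogous construction in the lower half-plane; $T(X,k)$ is $T_+(X)$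 rerooted at the triangle created at step $k$. Equality is as rooted triangulations up to equivalence. *)

theory Defs
  imports Main
begin

text \<open>Combinatorial model of the necklace construction.
  Letters: LB = B (new blue vertex), Lb = b (blue boundary step),
  LR = R (new red vertex), Lr = r (red boundary step).\<close>

datatype letter = LB | Lb | LR | Lr

fun prime_letter :: "letter \<Rightarrow> letter" where
  "prime_letter LB = Lb"
| "prime_letter LR = Lr"
| "prime_letter Lb = LB"
| "prime_letter Lr = LR"

datatype color = Blue | Red

text \<open>Vertices: integer points of the real line, or the vertex created at step j
  (flag True = upper half-plane, False = lower half-plane), with its colour.\<close>
datatype vtx = RV int | NV bool nat color

text \<open>Edges: real-line edge [m,m+1], or a new edge created at step j (index k).\<close>
datatype edg = RE int | NE bool nat nat

fun vcol :: "vtx \<Rightarrow> color" where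
  "vcol (RV m) = (if m \<le> 0 then Blue else Red)"
| "vcol (NV s j c) = c"

text \<open>A triangle: vertices (v0,v1,v2) and edges (v0v1, v1v2, v2v0).\<close>
type_synonym tri = "(vtx \<times> vtx \<times> vtx) \<times> (edg \<times> edg \<times> edg)"

text \<open>State: boundary to the left of the blue active vertex (list of (next vertex,
  connecting edge), nearest first), blue active vertex, red active vertex,
  boundary to the right of the red active vertex, active edge.  Once a
  stack is empty the boundary continues along the real line.\<close>
type_synonym state = "(vtx \<times> edg) list \<times> vtx \<times> vtx \<times> (vtx \<times> edg) list \<times> edg"

definition init_state :: state where
  "init_state = ([], RV 0, RV 1, [], RE 0)"

fun pop_left :: "vtx \<Rightarrow> (vtx \<times> edg) list \<Rightarrow> vtx \<times> edg \<times> (vtx \<times> edg) list" where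
  "pop_left v ((w, e) # rest) = (w, e, rest)"
| "pop_left (RV m) [] = (RV (m - 1), RE (m - 1), [])"
| "pop_left v [] = undefined"

fun pop_right :: "vtx \<Rightarrow> (vtx \<times> edg) list \<Rightarrow> vtx \<times> edg \<times> (vtx \<times> edg) list" where
  "pop_right v ((w, e) # rest) = (w, e, rest)"
| "pop_right (RV m) [] = (RV (m + 1), RE m, [])"
| "pop_right v [] = undefined"

text \<open>One step of the construction, producing step number j+1 on side s.
  Triangles are listed in the vertex order given in the construction
  (which is counterclockwise in the upper half-plane).\<close>
fun step :: "bool \<Rightarrow> nat \<Rightarrow> state \<Rightarrow> letter \<Rightarrow> tri \<times> state" where
  "step s j (bl, b, r, rl, a) LB =
     (let w = NV s (Suc j) Blue; ebw = NE s (Suc j) 0; erw = NE s (Suc j) 1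
      in (((b, r, w), (a, erw, ebw)), ((b, ebw) # bl, w, r, rl, erw)))"
| "step s j (bl, b, r, rl, a) LR =
     (let w = NV s (Suc j) Red; ebw = NE s (Suc j) 0; erw = NE s (Suc j) 1
      in (((b, r, w), (a, erw, ebw)), (bl, b, w, (r, erw) # rl, ebw)))"
| "step s j (bl, b, r, rl, a) Lb =
     (case pop_left b bl of (v, e, rest) \<Rightarrow>
        (let a' = NE s (Suc j) 0
         in (((v, b, r), (e, a, a')), (rest, v, r, rl, a'))))"
| "step s j (bl, b, r, rl, a) Lr =
     (case pop_right r rl of (v, e, rest) \<Rightarrow>
        (let a' = NE s (Suc j) 0
         in (((b, r, v), (a, e, a')), (bl, b, v, rest, a'))))"

fun run :: "bool \<Rightarrow> nat \<Rightarrow> state \<Rightarrow> letter list \<Rightarrow> tri list" where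
  "run s j st [] = []"
| "run s j st (x # xs) = (case step s j st x of (t, st') \<Rightarrow> t # run s (Suc j) st' xs)"

text \<open>Triangles of D_n; the i-th entry (0-based) is the triangle created at step i+1.\<close>
definition tris :: "bool \<Rightarrow> letter list \<Rightarrow> tri list" where
  "tris s W = run s 0 init_state W"

text \<open>Rooted triangulation: list of triangles and index of the root triangle.\<close>
type_synonym rtri = "tri list \<times> nat"

definition Tplus :: "letter list \<Rightarrow> rtri" where
  "Tplus W = (tris True W, 0)"

text \<open>Lower half-plane construction (the mirror image); triangles stored in the
  construction order, which is clockwise in the plane.\<close>
definition Tminus :: "letter list \<Rightarrow> rtri" where
  "Tminus W = (tris False W, 0)"

text \<open>T(X,k): T_+(X) rerooted at the triangle created at step k.\<close>
definition Tat :: "letter list \<Rightarrow> nat \<Rightarrow> rtri" where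
  "Tat W k = (tris True W, k - 1)"

fun rev_tri :: "tri \<Rightarrow> tri" where
  "rev_tri ((a, b, c), (e0, e1, e2)) = ((a, c, b), (e2, e1, e0))"

text \<open>Gluing along the real line (integer vertices and real edges are shared);
  the lower triangles are reoriented to be counterclockwise in the plane.
  Rooted at the root of the upper triangulation.\<close>
definition glue :: "rtri \<Rightarrow> rtri \<Rightarrow> rtri" where
  "glue U L = (fst U @ map rev_tri (fst L), snd U)"

fun rot :: "tri \<Rightarrow> tri" where
  "rot ((a, b, c), (e0, e1, e2)) = ((b, c, a), (e1, e2, e0))"

fun map_tri :: "(vtx \<Rightarrow> vtx) \<Rightarrow> (edg \<Rightarrow> edg) \<Rightarrow> tri \<Rightarrow> tri" where
  "map_tri f g ((a, b, c), (e0, e1, e2)) = ((f a, f b, f c), (g e0, g e1, g e2))"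

fun tri_verts :: "tri \<Rightarrow> vtx set" where
  "tri_verts ((a, b, c), _) = {a, b, c}"

fun tri_edges :: "tri \<Rightarrow> edg set" where
  "tri_edges (_, (e0, e1, e2)) = {e0, e1, e2}"

definition verts :: "tri list \<Rightarrow> vtx set" where
  "verts ts = (\<Union>t\<in>set ts. tri_verts t)"

definition edges :: "tri list \<Rightarrow> edg set" where
  "edges ts = (\<Union>t\<in>set ts. tri_edges t)"

text \<open>Equivalence of rooted triangulations: bijections of triangles, vertices and
  edges preserving incidences with orientation (up to cyclic rotation of each
  triangle), vertex colours, and the root.\<close>
definition rt_equiv :: "rtri \<Rightarrow> rtri \<Rightarrow> bool" where
  "rt_equiv T1 T2 \<longleftrightarrow>
     snd T1 < length (fst T1) \<and>
     (\<exists>\<phi> \<alpha> \<beta>.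
        bij_betw \<phi> {..<length (fst T1)} {..<length (fst T2)} \<and>
        \<phi> (snd T1) = snd T2 \<and>
        bij_betw \<alpha> (verts (fst T1)) (verts (fst T2)) \<and>
        bij_betw \<beta> (edges (fst T1)) (edges (fst T2)) \<and>
        (\<forall>v\<in>verts (fst T1). vcol (\<alpha> v) = vcol v) \<and>
        (\<forall>i<length (fst T1). \<exists>k<(3::nat).
            map_tri \<alpha> \<beta> (fst T1 ! i) = (rot ^^ k) (fst T2 ! \<phi> i)))"

end

theory Submission
  imports Defs
begin

text \<open>
  The boundary of the partial triangulation after any step of the necklace
  construction is a bi-infinite path; numbering its vertices by the integers so that
  the active blue vertex sits at 0 and the active red vertex at 1 gives a \<^emph>\<open>frame\<close>.
  Each letter acts on frames by an explicit local rule (\<open>frame_step\<close>), and the primed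
  letter acts as the exact inverse of the letter, producing the mirror image of the same
  triangle (\<open>frame_step_undo\<close>).  Since the rule commutes with relabelling vertices and
  edges (\<open>frame_step_relabel\<close>), two facts about whole runs follow by induction:

  \<^item> \<open>run_relabel\<close>/\<open>run_continue\<close>: continuing the construction from two states with
    equivalent frames gives isomorphic triangulations;
  \<^item> \<open>run_dual\<close>: running the primed reversed word \<open>Y'\<close> in one half-plane produces the
    mirror image, triangle by triangle in reverse order, of running \<open>Y\<close> in the other.

  For \<open>Z = Y' X\<close> the first \<open>length Y\<close> triangles of \<open>T(Z)\<close> therefore form a copy of
  \<open>T_-(Y)\<close>, and the boundary reached afterwards is equivalent to the real line, so the
  remaining triangles form a copy of \<open>T_+(X)\<close> rooted at step \<open>length Y + 1\<close>.
\<close>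

section \<open>Boundary frames\<close>

text \<open>\<open>walk_left n v bl\<close> is the \<open>(n+1)\<close>-st boundary vertex to the left of \<open>v\<close> together
  with the boundary edge leading to it; once the stack is exhausted the walk continues
  along the real line.  \<open>walk_right\<close> is the mirror image.\<close>

primrec walk_left :: "nat \<Rightarrow> vtx \<Rightarrow> (vtx \<times> edg) list \<Rightarrow> vtx \<times> edg" where
  "walk_left 0 v bl = (case pop_left v bl of (w, e, rest) \<Rightarrow> (w, e))"
| "walk_left (Suc n) v bl = (case pop_left v bl of (w, e, rest) \<Rightarrow> walk_left n w rest)"

primrec walk_right :: "nat \<Rightarrow> vtx \<Rightarrow> (vtx \<times> edg) list \<Rightarrow> vtx \<times> edg" where
  "walk_right 0 v rl = (case pop_right v rl of (w, e, rest) \<Rightarrow> (w, e))"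
| "walk_right (Suc n) v rl = (case pop_right v rl of (w, e, rest) \<Rightarrow> walk_right n w rest)"

text \<open>The frame of a state: \<open>bvert st p\<close> is the boundary vertex at position \<open>p\<close>
  (blue active vertex at 0, red active vertex at 1) and \<open>bedge st p\<close> is the boundary
  edge from position \<open>p\<close> to \<open>p + 1\<close>, so \<open>bedge st 0\<close> is the active edge.\<close>

fun bvert :: "state \<Rightarrow> int \<Rightarrow> vtx" where
  "bvert (bl, b, r, rl, a) p =
     (if p = 0 then b else if p = 1 then r
      else if p < 0 then fst (walk_left (nat (- p - 1)) b bl)
      else fst (walk_right (nat (p - 2)) r rl))"

fun bedge :: "state \<Rightarrow> int \<Rightarrow> edg" where
  "bedge (bl, b, r, rl, a) p =
     (if p = 0 then a
      else if p < 0 then snd (walk_left (nat (- p - 1)) b bl)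
      else snd (walk_right (nat (p - 1)) r rl))"

type_synonym frame = "(int \<Rightarrow> vtx) \<times> (int \<Rightarrow> edg)"

definition frame :: "state \<Rightarrow> frame" where
  "frame st = (bvert st, bedge st)"

lemma fst_frame [simp]: "fst (frame st) = bvert st"
  and snd_frame [simp]: "snd (frame st) = bedge st"
  by (simp_all add: frame_def)

lemma walk_left_Cons: "walk_left n v ((w, e) # bl) = (if n = 0 then (w, e) else walk_left (n - 1) w bl)"
  by (cases n) auto

lemma walk_right_Cons: "walk_right n v ((w, e) # rl) = (if n = 0 then (w, e) else walk_right (n - 1) w rl)"
  by (cases n) auto

lemma walk_left_pop: "pop_left v bl = (w, e, rest) \<Longrightarrow>
    walk_left n v bl = (if n = 0 then (w, e) else walk_left (n - 1) w rest)"
  by (cases n) auto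

lemma walk_right_pop: "pop_right v rl = (w, e, rest) \<Longrightarrow>
    walk_right n v rl = (if n = 0 then (w, e) else walk_right (n - 1) w rest)"
  by (cases n) auto

lemma walk_left_line: "walk_left n (RV q) [] = (RV (q - int n - 1), RE (q - int n - 1))"
  by (induction n arbitrary: q) (auto simp: algebra_simps)

lemma walk_right_line: "walk_right n (RV q) [] = (RV (q + int n + 1), RE (q + int n))"
  by (induction n arbitrary: q) (auto simp: algebra_simps)

lemma bvert_init: "bvert init_state = RV"
  and bedge_init: "bedge init_state = RE"
  by (auto simp: init_state_def walk_left_line walk_right_line fun_eq_iff)

lemma frame_init: "frame init_state = (RV, RE)"
  by (simp add: frame_def bvert_init bedge_init)

section \<open>The construction acting on frames\<close>

text \<open>One step on the level of frames, given the new vertex and the two new edges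
  \<open>(w, e0, e1)\<close> it may use: the triangle created and the new frame.\<close>

fun frame_step :: "letter \<Rightarrow> vtx \<times> edg \<times> edg \<Rightarrow> frame \<Rightarrow> tri \<times> frame" where
  "frame_step LB (w, e0, e1) (V, E) =
     (((V 0, V 1, w), (E 0, e1, e0)),
      (\<lambda>p. if p = 0 then w else if p < 0 then V (p + 1) else V p,
       \<lambda>p. if p = 0 then e1 else if p = -1 then e0 else if p < 0 then E (p + 1) else E p))"
| "frame_step LR (w, e0, e1) (V, E) =
     (((V 0, V 1, w), (E 0, e1, e0)),
      (\<lambda>p. if p = 1 then w else if 2 \<le> p then V (p - 1) else V p,
       \<lambda>p. if p = 0 then e0 else if p = 1 then e1 else if 2 \<le> p then E (p - 1) else E p))"
| "frame_step Lb (w, e0, e1) (V, E) =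
     (((V (-1), V 0, V 1), (E (-1), E 0, e0)),
      (\<lambda>p. if p \<le> 0 then V (p - 1) else V p,
       \<lambda>p. if p = 0 then e0 else if p < 0 then E (p - 1) else E p))"
| "frame_step Lr (w, e0, e1) (V, E) =
     (((V 0, V 1, V 2), (E 0, E 1, e0)),
      (\<lambda>p. if 1 \<le> p then V (p + 1) else V p,
       \<lambda>p. if p = 0 then e0 else if 1 \<le> p then E (p + 1) else E p))"

definition fresh :: "bool \<Rightarrow> nat \<Rightarrow> letter \<Rightarrow> vtx \<times> edg \<times> edg" where
  "fresh s j x = (NV s (Suc j) (if x = LR then Red else Blue), NE s (Suc j) 0, NE s (Suc j) 1)"

lemma nat_pred: "nat x - Suc 0 = nat (x - 1)"
  by simp

lemma step_frame:
  "frame_step x (fresh s j x) (frame st) = (fst (step s j st x), frame (snd (step s j st x)))"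
proof (cases st)
  case (fields bl b r rl a)
  show ?thesis
  proof (cases x)
    case LB then show ?thesis unfolding fields
      by (auto simp: fresh_def frame_def fun_eq_iff Let_def walk_left_Cons nat_pred algebra_simps)
  next
    case LR then show ?thesis unfolding fields
      by (auto simp: fresh_def frame_def fun_eq_iff Let_def walk_right_Cons nat_pred algebra_simps)
  next
    case Lb then show ?thesis unfolding fields
      by (auto simp: fresh_def frame_def fun_eq_iff Let_def walk_left_pop nat_pred algebra_simps split: prod.split)
  next
    case Lr then show ?thesis unfolding fields
      by (auto simp: fresh_def frame_def fun_eq_iff Let_def walk_right_pop nat_pred algebra_simps split: prod.split)
  qed
qed

text \<open>The primed letter undoes a step: from the new frame, using the boundary elements
  that the step removed (\<open>undo\<close>) as its fresh elements, it recovers the old frame and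
  produces the same triangle with reversed orientation.\<close>

fun undo :: "letter \<Rightarrow> frame \<Rightarrow> vtx \<times> edg \<times> edg" where
  "undo LB (V, E) = (V 0, E 0, E 0)"
| "undo LR (V, E) = (V 1, E 0, E 0)"
| "undo Lb (V, E) = (V 0, E (-1), E 0)"
| "undo Lr (V, E) = (V 1, E 0, E 1)"

lemma prime_letter_involution [simp]: "prime_letter (prime_letter x) = x"
  by (cases x) simp_all

lemma frame_step_undo:
  "frame_step (prime_letter x) (undo x F) (snd (frame_step x n F)) = (rev_tri (fst (frame_step x n F)), F)"
  by (cases x; cases F; cases n) (auto simp: fun_eq_iff)

definition relabel :: "(vtx \<Rightarrow> vtx) \<Rightarrow> (edg \<Rightarrow> edg) \<Rightarrow> frame \<Rightarrow> frame" where
  "relabel f f' F = (f \<circ> fst F, f' \<circ> snd F)"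

lemma frame_step_relabel:
  "frame_step x (map_prod f (map_prod f' f') n) (relabel f f' F) =
     map_prod (map_tri f f') (relabel f f') (frame_step x n F)"
  by (cases x; cases F; cases n) (auto simp: relabel_def fun_eq_iff)

lemma relabel_cong:
  "(\<forall>p. f (fst F p) = g (fst F p)) \<Longrightarrow> (\<forall>p. f' (snd F p) = g' (snd F p)) \<Longrightarrow>
     relabel f f' F = relabel g g' F"
  by (simp add: relabel_def comp_def)

lemma frame_step_support:
  assumes "frame_step x (w, e0, e1) F = (t, F')"
  shows "tri_verts t \<union> range (fst F') \<subseteq> range (fst F) \<union> {w}"
    and "tri_edges t \<union> range (snd F') \<subseteq> range (snd F) \<union> {e0, e1}"
  using assms by (cases x; cases F; auto)+

lemma frame_step_tri_verts:
  "tri_verts (fst (frame_step x n F)) \<subseteq> range (fst F) \<union> range (fst (snd (frame_step x n F)))"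
  by (cases x; cases F; cases n) (auto intro: range_eqI[where x = 0] range_eqI[where x = 1])

definition coloured :: "frame \<Rightarrow> bool" where
  "coloured F \<longleftrightarrow> (\<forall>p. vcol (fst F p) = (if p \<le> 0 then Blue else Red))"

lemma coloured_frame_step:
  assumes "coloured F" and "vcol w = (if x = LR then Red else Blue)"
  shows "coloured (snd (frame_step x (w, e0, e1) F))"
  using assms by (cases x; cases F) (auto simp: coloured_def)

lemma relabel_colour:
  assumes "coloured F" "coloured (relabel f f' F)" "v \<in> range (fst F)"
  shows "vcol (f v) = vcol v"
  using assms by (auto simp: coloured_def relabel_def)

fun fin :: "bool \<Rightarrow> nat \<Rightarrow> state \<Rightarrow> letter list \<Rightarrow> state" where
  "fin s j st [] = st"
| "fin s j st (x # xs) = fin s (Suc j) (snd (step s j st x)) xs"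

lemma run_Cons_step:
  "run s j st (x # xs) = fst (step s j st x) # run s (Suc j) (snd (step s j st x)) xs"
  by (simp split: prod.split)

lemma length_run [simp]: "length (run s j st xs) = length xs"
  by (induction xs arbitrary: j st) (auto simp: run_Cons_step simp del: run.simps(2))

lemma length_tris [simp]: "length (tris s xs) = length xs"
  by (simp add: tris_def)

lemma run_append:
  "run s j st (xs @ ys) = run s j st xs @ run s (j + length xs) (fin s j st xs) ys"
  by (induction xs arbitrary: j st) (auto simp: run_Cons_step simp del: run.simps(2))

lemma run_snoc:
  "run s j st (xs @ [x]) = run s j st xs @ [fst (step s (j + length xs) (fin s j st xs) x)]"
  by (simp add: run_append run_Cons_step del: run.simps(2))

lemma fin_snoc: "fin s j st (xs @ [x]) = snd (step s (j + length xs) (fin s j st xs) x)"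
  by (induction xs arbitrary: j st) auto

lemma verts_Nil [simp]: "verts [] = {}"
  and verts_Cons [simp]: "verts (t # ts) = tri_verts t \<union> verts ts"
  and verts_append [simp]: "verts (ts @ us) = verts ts \<union> verts us"
  by (auto simp: verts_def)

lemma edges_Nil [simp]: "edges [] = {}"
  and edges_Cons [simp]: "edges (t # ts) = tri_edges t \<union> edges ts"
  and edges_append [simp]: "edges (ts @ us) = edges ts \<union> edges us"
  by (auto simp: edges_def)

lemma step_support:
  "tri_verts (fst (step s j st x)) \<union> range (bvert (snd (step s j st x)))
     \<subseteq> range (bvert st) \<union> {NV s (Suc j) c | c. True}"
  "tri_edges (fst (step s j st x)) \<union> range (bedge (snd (step s j st x)))
     \<subseteq> range (bedge st) \<union> {NE s (Suc j) k | k. True}"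
  using frame_step_support[OF step_frame[of x s j st, unfolded fresh_def]] by (auto simp: frame_def)

lemma coloured_step:
  assumes "coloured (frame st)"
  shows "coloured (frame (snd (step s j st x)))"
proof -
  have "frame (snd (step s j st x)) = snd (frame_step x (fresh s j x) (frame st))"
    by (simp add: step_frame)
  then show ?thesis using coloured_frame_step[of "frame st" _ x] assms by (simp add: fresh_def)
qed

lemma step_tri_verts:
  "tri_verts (fst (step s j st x)) \<subseteq> range (bvert st) \<union> range (bvert (snd (step s j st x)))"
proof -
  have "fst (frame_step x (fresh s j x) (frame st)) = fst (step s j st x)"
    and "fst (snd (frame_step x (fresh s j x) (frame st))) = bvert (snd (step s j st x))"
    by (simp_all add: step_frame)
  then show ?thesis using frame_step_tri_verts[of x "fresh s j x" "frame st"] by simp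
qed

lemma verts_run:
  "v \<in> verts (run s j st W) \<Longrightarrow>
     v \<in> range (bvert st) \<or> (\<exists>i c. v = NV s i c \<and> j < i \<and> i \<le> j + length W)"
proof (induction W arbitrary: j st)
  case (Cons x W)
  let ?st' = "snd (step s j st x)"
  have "v \<in> tri_verts (fst (step s j st x)) \<or> v \<in> verts (run s (Suc j) ?st' W)"
    using Cons.prems by (simp add: run_Cons_step del: run.simps(2))
  then have "v \<in> tri_verts (fst (step s j st x)) \<or> v \<in> range (bvert ?st')
      \<or> (\<exists>i c. v = NV s i c \<and> Suc j < i \<and> i \<le> Suc j + length W)"
    using Cons.IH by blast
  then show ?case using step_support(1)[of s j st x] by auto
qed simp

lemma edges_run:
  "e \<in> edges (run s j st W) \<Longrightarrow>
     e \<in> range (bedge st) \<or> (\<exists>i k. e = NE s i k \<and> j < i \<and> i \<le> j + length W)"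
proof (induction W arbitrary: j st)
  case (Cons x W)
  let ?st' = "snd (step s j st x)"
  have "e \<in> tri_edges (fst (step s j st x)) \<or> e \<in> edges (run s (Suc j) ?st' W)"
    using Cons.prems by (simp add: run_Cons_step del: run.simps(2))
  then have "e \<in> tri_edges (fst (step s j st x)) \<or> e \<in> range (bedge ?st')
      \<or> (\<exists>i k. e = NE s i k \<and> Suc j < i \<and> i \<le> Suc j + length W)"
    using Cons.IH by blast
  then show ?case using step_support(2)[of s j st x] by auto
qed simp

definition old_vtx :: "bool \<Rightarrow> nat \<Rightarrow> vtx \<Rightarrow> bool" where
  "old_vtx s j v \<longleftrightarrow> (\<forall>i c. v = NV s i c \<longrightarrow> i \<le> j)"

definition old_edg :: "bool \<Rightarrow> nat \<Rightarrow> edg \<Rightarrow> bool" where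
  "old_edg s j e \<longleftrightarrow> (\<forall>i k. e = NE s i k \<longrightarrow> i \<le> j)"

definition state_inv :: "bool \<Rightarrow> nat \<Rightarrow> state \<Rightarrow> bool" where
  "state_inv s j st \<longleftrightarrow> coloured (frame st)
     \<and> (\<forall>p. old_vtx s j (bvert st p)) \<and> (\<forall>p. old_edg s j (bedge st p))"

lemma state_inv_init: "state_inv s 0 init_state"
  by (simp add: state_inv_def frame_init bvert_init bedge_init coloured_def old_vtx_def old_edg_def)

lemma old_vtx_mono: "old_vtx s j v \<Longrightarrow> j \<le> k \<Longrightarrow> old_vtx s k v"
  and old_edg_mono: "old_edg s j e \<Longrightarrow> j \<le> k \<Longrightarrow> old_edg s k e"
  by (auto simp: old_vtx_def old_edg_def)

lemma state_inv_step:
  assumes inv: "state_inv s j st"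
  shows "state_inv s (Suc j) (snd (step s j st x))"
proof -
  let ?st' = "snd (step s j st x)"
  have "coloured (frame ?st')"
    using coloured_step inv by (simp add: state_inv_def)
  moreover have "old_vtx s (Suc j) v" if "v \<in> range (bvert ?st')" for v
  proof -
    have "v \<in> range (bvert st) \<or> (\<exists>c. v = NV s (Suc j) c)"
      using that step_support(1)[of s j st x] by blast
    then show ?thesis
    proof
      assume "v \<in> range (bvert st)"
      with inv have "old_vtx s j v" by (auto simp: state_inv_def)
      then show ?thesis by (rule old_vtx_mono) simp
    qed (auto simp: old_vtx_def)
  qed
  moreover have "old_edg s (Suc j) e" if "e \<in> range (bedge ?st')" for e
  proof -
    have "e \<in> range (bedge st) \<or> (\<exists>k. e = NE s (Suc j) k)"
      using that step_support(2)[of s j st x] by blast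
    then show ?thesis
    proof
      assume "e \<in> range (bedge st)"
      with inv have "old_edg s j e" by (auto simp: state_inv_def)
      then show ?thesis by (rule old_edg_mono) simp
    qed (auto simp: old_edg_def)
  qed
  ultimately show ?thesis by (simp add: state_inv_def)
qed

lemma state_inv_fin: "state_inv s j st \<Longrightarrow> state_inv s (j + length xs) (fin s j st xs)"
proof (induction xs arbitrary: j st)
  case (Cons x xs)
  show ?case using Cons.IH[OF state_inv_step[OF Cons.prems, of x]] by simp
qed simp

lemma verts_run_old:
  assumes "state_inv s j st" "v \<in> verts (run s j st W)"
  shows "old_vtx s (j + length W) v"
  using verts_run[OF assms(2)]
proof
  assume "v \<in> range (bvert st)"
  with assms(1) have "old_vtx s j v" by (auto simp: state_inv_def)
  then show ?thesis by (rule old_vtx_mono) simp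
qed (auto simp: old_vtx_def)

lemma edges_run_old:
  assumes "state_inv s j st" "e \<in> edges (run s j st W)"
  shows "old_edg s (j + length W) e"
  using edges_run[OF assms(2)]
proof
  assume "e \<in> range (bedge st)"
  with assms(1) have "old_edg s j e" by (auto simp: state_inv_def)
  then show ?thesis by (rule old_edg_mono) simp
qed (auto simp: old_edg_def)

section \<open>Continuing a run from an equivalent state\<close>

lemma map_tri_cong:
  "(\<forall>v\<in>tri_verts t. f v = g v) \<Longrightarrow> (\<forall>e\<in>tri_edges t. f' e = g' e) \<Longrightarrow>
     map_tri f f' t = map_tri g g' t"
  by (cases t) auto

lemma map_map_tri_cong:
  "(\<forall>v\<in>verts T. f v = g v) \<Longrightarrow> (\<forall>e\<in>edges T. f' e = g' e) \<Longrightarrow>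
     map (map_tri f f') T = map (map_tri g g') T"
  by (auto simp: verts_def edges_def intro!: map_tri_cong)

lemma run_relabel:
  assumes "relabel f f' (frame st1) = frame st2"
    and "coloured (frame st1)" and "coloured (frame st2)"
    and "\<And>i c. f (NV s (j1 + Suc i) c) = NV s (j2 + Suc i) c"
    and "\<And>i k. f' (NE s (j1 + Suc i) k) = NE s (j2 + Suc i) k"
  shows "map (map_tri f f') (run s j1 st1 X) = run s j2 st2 X
    \<and> (\<forall>v\<in>verts (run s j1 st1 X). vcol (f v) = vcol v)"
  using assms
proof (induction X arbitrary: j1 j2 st1 st2)
  case (Cons x X)
  let ?st1' = "snd (step s j1 st1 x)" and ?st2' = "snd (step s j2 st2 x)"
  have "map_prod f (map_prod f' f') (fresh s j1 x) = fresh s j2 x"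
    using Cons.prems(4)[of 0] Cons.prems(5)[of 0] by (simp add: fresh_def)
  then have "frame_step x (fresh s j2 x) (frame st2) =
      map_prod (map_tri f f') (relabel f f') (frame_step x (fresh s j1 x) (frame st1))"
    using frame_step_relabel[of x f f' "fresh s j1 x" "frame st1"] Cons.prems(1) by simp
  then have tri: "map_tri f f' (fst (step s j1 st1 x)) = fst (step s j2 st2 x)"
    and fr: "relabel f f' (frame ?st1') = frame ?st2'"
    by (simp_all add: step_frame)
  have col1: "coloured (frame ?st1')" and col2: "coloured (frame ?st2')"
    using Cons.prems(2,3) by (simp_all add: coloured_step)
  have IH: "map (map_tri f f') (run s (Suc j1) ?st1' X) = run s (Suc j2) ?st2' X
      \<and> (\<forall>v\<in>verts (run s (Suc j1) ?st1' X). vcol (f v) = vcol v)"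
    by (rule Cons.IH[OF fr col1 col2]) (use Cons.prems(4,5) in \<open>simp_all flip: add_Suc_right\<close>)
  have "vcol (f v) = vcol v" if "v \<in> tri_verts (fst (step s j1 st1 x))" for v
  proof -
    have "v \<in> range (fst (frame st1)) \<or> v \<in> range (fst (frame ?st1'))"
      using that step_tri_verts[of s j1 st1 x] by auto
    then show ?thesis
      using relabel_colour[of "frame st1" f f'] relabel_colour[of "frame ?st1'" f f']
        Cons.prems(1-3) fr col1 col2 by auto
  qed
  with tri IH show ?case by (auto simp: run_Cons_step simp del: run.simps(2))
qed simp

fun renum :: "bool \<Rightarrow> nat \<Rightarrow> nat \<Rightarrow> (vtx \<Rightarrow> vtx) \<Rightarrow> vtx \<Rightarrow> vtx" where
  "renum s a b f (NV s' i c) = (if s' = s \<and> a < i then NV s (i - a + b) c else f (NV s' i c))"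
| "renum s a b f (RV q) = f (RV q)"

fun renum_e :: "bool \<Rightarrow> nat \<Rightarrow> nat \<Rightarrow> (edg \<Rightarrow> edg) \<Rightarrow> edg \<Rightarrow> edg" where
  "renum_e s a b f (NE s' i k) = (if s' = s \<and> a < i then NE s (i - a + b) k else f (NE s' i k))"
| "renum_e s a b f (RE q) = f (RE q)"

lemma renum_old: "old_vtx s a v \<Longrightarrow> renum s a b f v = f v"
  by (cases v) (auto simp: old_vtx_def)

lemma renum_e_old: "old_edg s a e \<Longrightarrow> renum_e s a b f e = f e"
  by (cases e) (auto simp: old_edg_def)

lemma run_continue:
  assumes inv: "state_inv s j1 st1" and col: "coloured (frame st2)"
    and rel: "relabel f f' (frame st1) = frame st2"
  shows "map (map_tri (renum s j1 j2 f) (renum_e s j1 j2 f')) (run s j1 st1 X) = run s j2 st2 X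
    \<and> (\<forall>v\<in>verts (run s j1 st1 X). vcol (renum s j1 j2 f v) = vcol v)"
proof (rule run_relabel)
  have "relabel (renum s j1 j2 f) (renum_e s j1 j2 f') (frame st1) = relabel f f' (frame st1)"
    using inv by (intro relabel_cong) (simp_all add: state_inv_def renum_old renum_e_old)
  with rel show "relabel (renum s j1 j2 f) (renum_e s j1 j2 f') (frame st1) = frame st2"
    by simp
qed (use inv col in \<open>simp_all add: state_inv_def\<close>)

section \<open>Duality between a word and its primed reverse\<close>

lemma rev_tri_rev_tri [simp]: "rev_tri (rev_tri t) = t"
  by (cases t) auto

lemma map_tri_rev_tri: "map_tri f f' (rev_tri t) = rev_tri (map_tri f f' t)"
  by (cases t) auto

lemma step_undo:
  "frame_step (prime_letter y) (undo y (frame tw)) (frame (snd (step s k tw y))) =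
     (rev_tri (fst (step s k tw y)), frame tw)"
  using frame_step_undo[of y "frame tw" "fresh s k y"] by (simp add: step_frame)

text \<open>One step of the duality: if the frame of \<open>sz\<close> is a relabelling of the frame
  after the \<open>y\<close>-step from \<open>tw\<close>, then extending the relabelling by sending the fresh
  elements of the primed step to the boundary elements that \<open>y\<close> removed maps the primed
  triangle onto the mirrored \<open>y\<close>-triangle and the new frame onto the frame of \<open>tw\<close>.\<close>
lemma step_dual:
  assumes inv1: "state_inv s1 J sz" and inv2: "state_inv s2 k tw"
    and rel: "relabel f f' (frame sz) = frame (snd (step s2 k tw y))"
  obtains g g' where "\<And>v. old_vtx s1 J v \<Longrightarrow> g v = f v" and "\<And>e. old_edg s1 J e \<Longrightarrow> g' e = f' e"
    and "map_tri g g' (fst (step s1 J sz (prime_letter y))) = rev_tri (fst (step s2 k tw y))"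
    and "relabel g g' (frame (snd (step s1 J sz (prime_letter y)))) = frame tw"
    and "\<forall>v\<in>tri_verts (fst (step s1 J sz (prime_letter y))). vcol (g v) = vcol v"
proof -
  let ?nu = "fresh s1 J (prime_letter y)" and ?sz' = "snd (step s1 J sz (prime_letter y))"
  obtain w e0 e1 where u: "undo y (frame tw) = (w, e0, e1)" by (cases "undo y (frame tw)")
  define g where "g = f(fst ?nu := w)"
  define g' where "g' = f'(fst (snd ?nu) := e0, snd (snd ?nu) := e1)"
  have old_v: "g v = f v" if "old_vtx s1 J v" for v
    using that by (auto simp: g_def fresh_def old_vtx_def)
  have old_e: "g' e = f' e" if "old_edg s1 J e" for e
    using that by (auto simp: g'_def fresh_def old_edg_def)
  have new: "map_prod g (map_prod g' g') ?nu = undo y (frame tw)"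
    by (simp add: u g_def g'_def fresh_def)
  have rel_g: "relabel g g' (frame sz) = frame (snd (step s2 k tw y))"
    using inv1 rel[symmetric] by (auto intro!: relabel_cong simp: state_inv_def old_v old_e)
  have "map_prod (map_tri g g') (relabel g g') (frame_step (prime_letter y) ?nu (frame sz))
      = (rev_tri (fst (step s2 k tw y)), frame tw)"
    using frame_step_relabel[of "prime_letter y" g g' ?nu "frame sz"] new rel_g step_undo[of y tw s2 k]
    by simp
  then have tri: "map_tri g g' (fst (step s1 J sz (prime_letter y))) = rev_tri (fst (step s2 k tw y))"
    and rel_g': "relabel g g' (frame ?sz') = frame tw"
    by (simp_all add: step_frame)
  have "vcol (g v) = vcol v" if "v \<in> tri_verts (fst (step s1 J sz (prime_letter y)))" for v
  proof -
    have "v \<in> range (fst (frame sz)) \<or> v \<in> range (fst (frame ?sz'))"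
      using that step_tri_verts[of s1 J sz "prime_letter y"] by auto
    moreover have "coloured (frame sz)" "coloured (frame ?sz')"
      "coloured (frame (snd (step s2 k tw y)))" "coloured (frame tw)"
      using inv1 inv2 coloured_step by (auto simp: state_inv_def)
    ultimately show ?thesis
      using relabel_colour[of "frame sz" g g' v] relabel_colour[of "frame ?sz'" g g' v] rel_g rel_g'
      by auto
  qed
  with old_v old_e tri rel_g' show thesis by (intro that) auto
qed

text \<open>Induction on \<open>Y\<close>,
  peeling off the first letter of \<open>Y\<close>, which the last primed letter undoes.\<close>
lemma run_dual:
  assumes inv1: "state_inv s1 j sz" and inv2: "state_inv s2 k tw"
    and base: "relabel h h' (frame sz) = frame (fin s2 k tw Y)"
  shows "\<exists>f f'. relabel f f' (frame sz) = frame (fin s2 k tw Y)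
     \<and> relabel f f' (frame (fin s1 j sz (rev (map prime_letter Y)))) = frame tw
     \<and> map (map_tri f f') (run s1 j sz (rev (map prime_letter Y))) = rev (map rev_tri (run s2 k tw Y))
     \<and> (\<forall>v\<in>verts (run s1 j sz (rev (map prime_letter Y))). vcol (f v) = vcol v)"
  using inv2 base
proof (induction Y arbitrary: k tw)
  case Nil
  then show ?case by auto
next
  case (Cons y Y)
  define W where "W = rev (map prime_letter Y)"
  define J where "J = j + length Y"
  define sz' where "sz' = fin s1 j sz W"
  define tw1 where "tw1 = snd (step s2 k tw y)"
  have lenW: "length W = length Y" by (simp add: W_def)
  have inv_tw1: "state_inv s2 (Suc k) tw1"
    unfolding tw1_def by (rule state_inv_step[OF Cons.prems(1)])
  have inv_sz': "state_inv s1 J sz'"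
    unfolding sz'_def J_def using state_inv_fin[OF inv1, of W] lenW by simp
  have "relabel h h' (frame sz) = frame (fin s2 (Suc k) tw1 Y)"
    using Cons.prems(2) by (simp add: tw1_def)
  from Cons.IH[OF inv_tw1 this] obtain f f' where
    start: "relabel f f' (frame sz) = frame (fin s2 (Suc k) tw1 Y)"
    and mid: "relabel f f' (frame sz') = frame tw1"
    and tris: "map (map_tri f f') (run s1 j sz W) = rev (map rev_tri (run s2 (Suc k) tw1 Y))"
    and col: "\<forall>v\<in>verts (run s1 j sz W). vcol (f v) = vcol v"
    unfolding W_def[symmetric] sz'_def[symmetric] by blast
  obtain g g' where old_v: "\<And>v. old_vtx s1 J v \<Longrightarrow> g v = f v"
    and old_e: "\<And>e. old_edg s1 J e \<Longrightarrow> g' e = f' e"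
    and tri: "map_tri g g' (fst (step s1 J sz' (prime_letter y))) = rev_tri (fst (step s2 k tw y))"
    and final: "relabel g g' (frame (snd (step s1 J sz' (prime_letter y)))) = frame tw"
    and col_tri: "\<forall>v\<in>tri_verts (fst (step s1 J sz' (prime_letter y))). vcol (g v) = vcol v"
    using step_dual[OF inv_sz' Cons.prems(1) mid[unfolded tw1_def]] by blast
  have old_W: "old_vtx s1 J v" if "v \<in> verts (run s1 j sz W)" for v
    using verts_run_old[OF inv1 that] lenW by (simp add: J_def)
  have "relabel g g' (frame sz) = relabel f f' (frame sz)"
    using inv1 old_vtx_mono[of s1 j _ J] old_edg_mono[of s1 j _ J]
    by (intro relabel_cong) (auto simp: state_inv_def J_def old_v old_e)
  moreover have "map (map_tri g g') (run s1 j sz W) = map (map_tri f f') (run s1 j sz W)"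
    using old_W old_v old_e edges_run_old[OF inv1, of _ W] lenW
    by (intro map_map_tri_cong) (simp_all add: J_def)
  moreover have "run s1 j sz (rev (map prime_letter (y # Y))) =
      run s1 j sz W @ [fst (step s1 J sz' (prime_letter y))]"
    and "fin s1 j sz (rev (map prime_letter (y # Y))) = snd (step s1 J sz' (prime_letter y))"
    by (simp_all add: W_def J_def sz'_def run_snoc fin_snoc)
  moreover have "run s2 k tw (y # Y) = fst (step s2 k tw y) # run s2 (Suc k) tw1 Y"
    by (simp add: tw1_def run_Cons_step del: run.simps(2))
  ultimately show ?case
    using start final tris tri col col_tri old_W old_v by (intro exI[of _ g] exI[of _ g']) (auto simp: tw1_def)
qed

lemma verts_map_tri: "verts (map (map_tri f f') T) = f ` verts T"
  and edges_map_tri: "edges (map (map_tri f f') T) = f' ` edges T"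
proof -
  have "tri_verts (map_tri f f' t) = f ` tri_verts t" "tri_edges (map_tri f f' t) = f' ` tri_edges t" for t
    by (cases t; auto)+
  then show "verts (map (map_tri f f') T) = f ` verts T" "edges (map (map_tri f f') T) = f' ` edges T"
    by (auto simp: verts_def edges_def)
qed

lemma map_tri_fixes:
  assumes "map (map_tri f f') T = T"
  shows "\<forall>v\<in>verts T. f v = v" and "\<forall>e\<in>edges T. f' e = e"
proof -
  have fixed: "map_tri f f' t = t" if "t \<in> set T" for t
    using assms that map_eq_conv[of "map_tri f f'" T id] by simp
  have "tri_verts t \<subseteq> {v. f v = v}" "tri_edges t \<subseteq> {e. f' e = e}" if "map_tri f f' t = t" for t
    using that by (cases t; auto)+
  with fixed show "\<forall>v\<in>verts T. f v = v" "\<forall>e\<in>edges T. f' e = e"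
    by (auto simp: verts_def edges_def)
qed

lemma map_tri_comp: "map_tri g g' (map_tri f f' t) = map_tri (g \<circ> f) (g' \<circ> f') t"
  by (cases t) auto

lemma rt_equivI:
  assumes root: "r < length T1"
    and fwd: "map (map_tri \<alpha> \<beta>) T1 = P" and bwd: "map (map_tri \<gamma> \<delta>) P = T1"
    and col: "\<forall>v\<in>verts T1. vcol (\<alpha> v) = vcol v"
    and perm: "bij_betw \<phi> {..<length P} {..<length T2}" "\<forall>i<length P. P ! i = T2 ! \<phi> i"
    and root': "\<phi> r = r'"
  shows "rt_equiv (T1, r) (T2, r')"
proof -
  have len: "length P = length T1" using fwd by auto
  have "map (map_tri (\<gamma> \<circ> \<alpha>) (\<delta> \<circ> \<beta>)) T1 = map (map_tri \<gamma> \<delta>) (map (map_tri \<alpha> \<beta>) T1)"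
    by (simp add: map_tri_comp comp_def)
  then have "map (map_tri (\<gamma> \<circ> \<alpha>) (\<delta> \<circ> \<beta>)) T1 = T1"
    using fwd bwd by simp
  note inverse = map_tri_fixes[OF this]
  have "set P = set T2"
  proof -
    have "set P = (!) P ` {..<length P}"
      unfolding set_conv_nth by (auto simp: image_iff)
    also have "\<dots> = (\<lambda>i. T2 ! \<phi> i) ` {..<length P}"
      using perm(2) by (intro image_cong) simp_all
    also have "\<dots> = (!) T2 ` {..<length T2}"
      using bij_betw_imp_surj_on[OF perm(1)] by (metis image_image)
    also have "\<dots> = set T2"
      unfolding set_conv_nth by (auto simp: image_iff)
    finally show ?thesis .
  qed
  then have "verts P = verts T2" "edges P = edges T2" by (simp_all add: verts_def edges_def)
  then have img: "\<alpha> ` verts T1 = verts T2" "\<beta> ` edges T1 = edges T2"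
    using fwd verts_map_tri edges_map_tri by metis+
  have "bij_betw \<alpha> (verts T1) (verts T2)" "bij_betw \<beta> (edges T1) (edges T2)"
    using img inverse by (auto simp: bij_betw_def intro: inj_on_inverseI[where g = \<gamma>] inj_on_inverseI[where g = \<delta>])
  moreover have "\<forall>i<length T1. \<exists>k<3. map_tri \<alpha> \<beta> (T1 ! i) = (rot ^^ k) (T2 ! \<phi> i)"
    using fwd perm(2) len by (intro allI impI exI[of _ 0]) auto
  ultimately show ?thesis
    unfolding rt_equiv_def using root root' perm(1) col len by auto
qed

(* The list rev U @ V is the permutation rev_swap of V @ U. *)

definition rev_swap :: "nat \<Rightarrow> nat \<Rightarrow> nat \<Rightarrow> nat" where
  "rev_swap m n i = (if i < m then n + (m - Suc i) else i - m)"

lemma rev_swap_bij: "bij_betw (rev_swap m n) {..<m + n} {..<n + m}"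
  by (rule bij_betw_byWitness[where f' = "\<lambda>i. if i < n then i + m else m - Suc (i - n)"])
    (auto simp: rev_swap_def)

lemma rev_swap_nth:
  "i < length U + length V \<Longrightarrow> (rev U @ V) ! i = (V @ U) ! rev_swap (length U) (length V) i"
  by (auto simp: rev_swap_def nth_append rev_nth)

lemma relabel_from_line: "\<exists>h h'. relabel h h' (frame init_state) = F"
  by (intro exI[of _ "\<lambda>v. case v of RV p \<Rightarrow> fst F p | _ \<Rightarrow> v"]
      exI[of _ "\<lambda>e. case e of RE p \<Rightarrow> snd F p | _ \<Rightarrow> e"])
    (simp add: frame_init relabel_def comp_def)

lemma run_other_side_old:
  assumes "s' \<noteq> s"
  shows "v \<in> verts (run s' j init_state W) \<Longrightarrow> old_vtx s 0 v"
    and "e \<in> edges (run s' j init_state W) \<Longrightarrow> old_edg s 0 e"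
  using assms verts_run[of v s' j init_state W] edges_run[of e s' j init_state W]
  by (auto simp: bvert_init bedge_init old_vtx_def old_edg_def)

lemma mirror_prefix:
  fixes Y :: "letter list"
  defines "W \<equiv> rev (map prime_letter Y)"
  obtains f f' g g' where
    "relabel f f' (frame (fin True 0 init_state W)) = frame init_state"
    and "map (map_tri f f') (run True 0 init_state W) = rev (map rev_tri (tris False Y))"
    and "\<forall>v\<in>verts (run True 0 init_state W). vcol (f v) = vcol v"
    and "relabel g g' (frame init_state) = frame (fin True 0 init_state W)"
    and "map (map_tri g g') (tris False Y) = rev (map rev_tri (run True 0 init_state W))"
proof -
  have W_dual: "rev (map prime_letter W) = Y"
    by (simp add: W_def rev_map map_map comp_def)
  obtain h h' where "relabel h h' (frame init_state) = frame (fin False 0 init_state Y)"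
    using relabel_from_line by blast
  from run_dual[OF state_inv_init[of True] state_inv_init[of False] this]
  obtain f f' where F: "relabel f f' (frame (fin True 0 init_state W)) = frame init_state"
    "map (map_tri f f') (run True 0 init_state W) = rev (map rev_tri (tris False Y))"
    "\<forall>v\<in>verts (run True 0 init_state W). vcol (f v) = vcol v"
    unfolding W_def tris_def by blast
  obtain k k' where "relabel k k' (frame init_state) = frame (fin True 0 init_state W)"
    using relabel_from_line by blast
  from run_dual[OF state_inv_init[of False] state_inv_init[of True] this, unfolded W_dual]
  obtain g g' where G: "relabel g g' (frame init_state) = frame (fin True 0 init_state W)"
    "map (map_tri g g') (tris False Y) = rev (map rev_tri (run True 0 init_state W))"
    unfolding tris_def by blast
  show thesis using F G by (rule that)
qed

text \<open>\<open>T(Y' X)\<close> is relabelled onto the reversed mirror image of \<open>T_-(Y)\<close> followed by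
  \<open>T_+(X)\<close>, with a triangle-wise inverse: on the prefix use \<open>mirror_prefix\<close>, on the
  rest continue from the equivalent boundary, renumbering the later vertices.\<close>
lemma necklace_relabelling:
  fixes X Y :: "letter list"
  defines "W \<equiv> rev (map prime_letter Y)"
  shows "\<exists>\<alpha> \<beta> \<gamma> \<delta>.
      map (map_tri \<alpha> \<beta>) (tris True (W @ X)) = rev (map rev_tri (tris False Y)) @ tris True X
    \<and> map (map_tri \<gamma> \<delta>) (rev (map rev_tri (tris False Y)) @ tris True X) = tris True (W @ X)
    \<and> (\<forall>v\<in>verts (tris True (W @ X)). vcol (\<alpha> v) = vcol v)"
proof -
  define m where "m = length Y"
  define sm where "sm = fin True 0 init_state W"
  define A where "A = run True 0 init_state W"
  define B where "B = tris False Y"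
  have lenW: "length W = m" by (simp add: W_def m_def)
  have inv_sm: "state_inv True m sm"
    using state_inv_fin[OF state_inv_init, of True W] by (simp add: sm_def lenW)
  have Z: "tris True (W @ X) = A @ run True m sm X"
    by (simp add: tris_def run_append A_def sm_def lenW)
  obtain f f' g g' where f_end: "relabel f f' (frame sm) = frame init_state"
    and f_tris: "map (map_tri f f') A = rev (map rev_tri B)"
    and f_col: "\<forall>v\<in>verts A. vcol (f v) = vcol v"
    and g_start: "relabel g g' (frame init_state) = frame sm"
    and g_tris: "map (map_tri g g') B = rev (map rev_tri A)"
    using mirror_prefix[of Y] unfolding W_def[symmetric] sm_def[symmetric] A_def[symmetric] B_def[symmetric]
    by blast
  define \<alpha> where "\<alpha> = renum True m 0 f"
  define \<beta> where "\<beta> = renum_e True m 0 f'"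
  define \<gamma> where "\<gamma> = renum True 0 m g"
  define \<delta> where "\<delta> = renum_e True 0 m g'"
  have C_fwd: "map (map_tri \<alpha> \<beta>) (run True m sm X) = tris True X
      \<and> (\<forall>v\<in>verts (run True m sm X). vcol (\<alpha> v) = vcol v)"
    using run_continue[OF inv_sm _ f_end] state_inv_init[of True]
    by (simp add: \<alpha>_def \<beta>_def tris_def state_inv_def)
  have C_bwd: "map (map_tri \<gamma> \<delta>) (tris True X) = run True m sm X"
    using run_continue[OF state_inv_init _ g_start] inv_sm
    by (simp add: \<gamma>_def \<delta>_def tris_def state_inv_def)
  have A_v: "\<forall>v\<in>verts A. \<alpha> v = f v" and A_e: "\<forall>e\<in>edges A. \<beta> e = f' e"
    using verts_run_old[OF state_inv_init[of True], of _ W] edges_run_old[OF state_inv_init[of True], of _ W]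
    by (simp_all add: A_def lenW \<alpha>_def \<beta>_def renum_old renum_e_old)
  have "map (map_tri \<gamma> \<delta>) B = map (map_tri g g') B"
    unfolding \<gamma>_def \<delta>_def B_def tris_def using run_other_side_old[of False True _ 0 Y]
    by (intro map_map_tri_cong) (simp_all add: renum_old renum_e_old)
  with g_tris have "rev (map rev_tri (map (map_tri \<gamma> \<delta>) B)) = A"
    by (simp add: rev_map comp_def)
  then have B_bwd: "map (map_tri \<gamma> \<delta>) (rev (map rev_tri B)) = A"
    by (simp add: rev_map comp_def map_tri_rev_tri)
  show ?thesis
  proof (intro exI conjI)
    show "map (map_tri \<alpha> \<beta>) (tris True (W @ X)) = rev (map rev_tri (tris False Y)) @ tris True X"
      using map_map_tri_cong[OF A_v A_e] f_tris C_fwd by (simp add: Z B_def)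
    show "map (map_tri \<gamma> \<delta>) (rev (map rev_tri (tris False Y)) @ tris True X) = tris True (W @ X)"
      using B_bwd C_bwd by (simp add: Z B_def)
    show "\<forall>v\<in>verts (tris True (W @ X)). vcol (\<alpha> v) = vcol v"
      using A_v f_col C_fwd by (auto simp: Z)
  qed
qed

theorem mainTheorem10:
  fixes X Y :: "letter list"
  assumes "X \<noteq> []"
  shows "rt_equiv (Tat (rev (map prime_letter Y) @ X) (length Y + 1))
                  (glue (Tplus X) (Tminus Y))"
proof -
  let ?U = "map rev_tri (tris False Y)" and ?V = "tris True X"
  obtain \<alpha> \<beta> \<gamma> \<delta> where
    fwd: "map (map_tri \<alpha> \<beta>) (tris True (rev (map prime_letter Y) @ X)) = rev ?U @ ?V"
    and bwd: "map (map_tri \<gamma> \<delta>) (rev ?U @ ?V) = tris True (rev (map prime_letter Y) @ X)"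
    and col: "\<forall>v\<in>verts (tris True (rev (map prime_letter Y) @ X)). vcol (\<alpha> v) = vcol v"
    using necklace_relabelling[of Y X] by blast
  show ?thesis
    unfolding Tat_def glue_def Tplus_def Tminus_def fst_conv snd_conv
  proof (rule rt_equivI[OF _ fwd bwd col])
    show "length Y + 1 - 1 < length (tris True (rev (map prime_letter Y) @ X))"
      using assms by simp
    show "bij_betw (rev_swap (length Y) (length X)) {..<length (rev ?U @ ?V)} {..<length (?V @ ?U)}"
      using rev_swap_bij[of "length Y" "length X"] by simp
    show "\<forall>i<length (rev ?U @ ?V). (rev ?U @ ?V) ! i = (?V @ ?U) ! rev_swap (length Y) (length X) i"
      using rev_swap_nth[of _ ?U ?V] by simp
    show "rev_swap (length Y) (length X) (length Y + 1 - 1) = 0"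
      by (simp add: rev_swap_def)
  qed
qed

end
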